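(* Let $X$ be a random covariate vector with values in $\mathcal{X}$, $r\colon\mathcal{X}\to\{0,1\}$ a deterministic map, $A\in\{0,1\}$ and $S^\ast\in\{0,1\}$ random variables, and $Y^{a=0},Y^{a=1}$ integrable real-valued potential outcomes. Define $$A^\ast=S^\ast r(X)+(1-S^\ast)A,\quad Y^\ast=A^\ast Y^{a=1}+(1-A^\ast)Y^{a=0},$$ $$Y^{s=0}=AY^{a=1}+(1-A)Y^{a=0},\quad Y^{s=1}=r(X)Y^{a=1}+\{1-r(X)\}Y^{a=0}.$$ Assume $\{Y^{a=1},Y^{a=0}\}\perp\!\!\!\perp A\mid X$, $\{Y^{a=1},Y^{a=0}\}\perp\!\!\!\perp A^\ast\mid X$, $A\perp\!\!\!\perp S^\ast\mid X$, and $0<\pi(x)<1$, $0<\pi^\ast(x)<1$ for all $x\in\mathcal{X}$, where $\pi(x)=\mathbb{E}[A\mid X=x]$, $\pi^\ast(x)=\mathbb{E}[A^\ast\mid X=x]$. Let $\rho^\ast(x)=\mathbb{E}[S^\ast\mid X=x]$ and $\tau(x)=\mathbb{E}[Y^{a=1}-Y^{a=0}\mid X=x]$. Then the average implementation effect $\Lambda(r,\rho^\ast)=\mathbb{E}[Y^\ast-Y^{s=0}]$ and the maximal implementation gain $\Gamma(r,\rho^\ast)=\mathbb{E}[Y^{s=1}-Y^\ast]$ satisfy $$\Lambda(r,\rho^\ast)=\mathbb{E}\big[\{\pi^\ast(X)-\pi(X)\}\tau(X)\big]=\mathbb{E}\big[\rho^\ast(X)\{r(X)-\pi(X)\}\tau(X)\big],$$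 $$\Gamma(r,\rho^\ast)=\mathbb{E}\big[\{r(X)-\pi^\ast(X)\}\tau(X)\big]=\mathbb{E}\big[\{1-\rho^\ast(X)\}\{r(X)-\pi(X)\}\tau(X)\big].$$
   Context: This is the "new ITR" setting: $A$ is the treatment under usual care without the rule; $S^\ast$ indicates a (future) stochastic implementation of the rule $r$ with implementation function $\rho^\ast$; $A^\ast$ and $Y^\ast$ are the treatment and outcome under that partial implementation; $Y^{s=1}$ is the outcome if the rule were always followed and $Y^{s=0}$ the outcome under usual care. *)

theory Defs
  imports "HOL-Probability.Probability"
begin

definition sigma_of :: "'a measure \<Rightarrow> ('a \<Rightarrow> 'x) \<Rightarrow> 'x measure \<Rightarrow> 'a measure" where
  "sigma_of M X MX = vimage_algebra (space M) X MX"

text \<open>g is a version of the regression function x \<mapsto> E[f | X = x], i.e.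
  g is measurable on the covariate space and g(X) = E[f | sigma(X)] almost surely.\<close>
definition cond_exp_fun ::
  "'a measure \<Rightarrow> ('a \<Rightarrow> 'x) \<Rightarrow> 'x measure \<Rightarrow> ('a \<Rightarrow> real) \<Rightarrow> ('x \<Rightarrow> real) \<Rightarrow> bool" where
  "cond_exp_fun M X MX f g \<longleftrightarrow>
     g \<in> borel_measurable MX \<and>
     (AE \<omega> in M. g (X \<omega>) = real_cond_exp M (sigma_of M X MX) f \<omega>)"

definition cond_indep ::
  "'a measure \<Rightarrow> ('a \<Rightarrow> 'x) \<Rightarrow> 'x measure \<Rightarrow> 'u measure \<Rightarrow> ('a \<Rightarrow> 'u)
     \<Rightarrow> 'v measure \<Rightarrow> ('a \<Rightarrow> 'v) \<Rightarrow> bool" where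
  "cond_indep M X MX MU U MV V \<longleftrightarrow>
     (\<forall>B\<in>sets MU. \<forall>C\<in>sets MV.
        AE \<omega> in M.
          real_cond_exp M (sigma_of M X MX)
             (\<lambda>\<omega>. indicator B (U \<omega>) * indicator C (V \<omega>)) \<omega> =
          real_cond_exp M (sigma_of M X MX) (\<lambda>\<omega>. indicator B (U \<omega>)) \<omega> *
          real_cond_exp M (sigma_of M X MX) (\<lambda>\<omega>. indicator C (V \<omega>)) \<omega>)"

end

theory Submission
  imports Defs
begin

(* Since Yst - Ys0 = (Ast - A) (Y1 - Y0) and Ys1 - Yst = (r(X) - Ast) (Y1 - Y0), both quantities
   are differences of the integrals E[Z (Y1 - Y0)] for the weights Z = A, Ast, r(X).
   For a binary Z that is conditionally independent of (Y1, Y0) given X, reweighting the law of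
   (Y1, Y0) by Z or by its propensity q(X) = E[Z | X] yields the same measure, so the tower
   property gives E[Z (Y1 - Y0)] = E[q(X) tau(X)]; for Z = r(X) the tower property alone suffices.
   Finally Ast = r(X) Sst + A - A Sst, and the conditional independence of A and Sst factorises
   E[A Sst | X] = pi rhost, whence pist = pi + rhost (r - pi). *)

lemma integrable_bounded_mult:
  fixes f g :: "'a \<Rightarrow> real"
  assumes "integrable M g" "f \<in> borel_measurable M" "AE \<omega> in M. \<bar>f \<omega>\<bar> \<le> C"
  shows "integrable M (\<lambda>\<omega>. f \<omega> * g \<omega>)"
proof (rule Bochner_Integration.integrable_bound)
  show "integrable M (\<lambda>\<omega>. C * g \<omega>)" using assms(1) by simp
  show "(\<lambda>\<omega>. f \<omega> * g \<omega>) \<in> borel_measurable M"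
    using assms(1,2) by (simp add: borel_measurable_integrable)
  show "AE \<omega> in M. norm (f \<omega> * g \<omega>) \<le> norm (C * g \<omega>)"
    using assms(3) by eventually_elim (auto simp: abs_mult intro: mult_right_mono)
qed

lemma (in finite_measure) integrable_binary:
  fixes f :: "'a \<Rightarrow> real"
  assumes "f \<in> borel_measurable M" "\<And>\<omega>. \<omega> \<in> space M \<Longrightarrow> f \<omega> \<in> {0, 1}"
  shows "integrable M f"
  by (rule integrable_const_bound[where B=1]) (use assms in \<open>auto intro!: AE_I2 dest: assms(2)\<close>)

lemma emeasure_distr_density_eq_integral:
  fixes w :: "'a \<Rightarrow> real"
  assumes "integrable M w" "AE \<omega> in M. 0 \<le> w \<omega>"
    and [measurable]: "U \<in> measurable M MU" "B \<in> sets MU"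
  shows "emeasure (distr (density M w) MU U) B = ennreal (\<integral>\<omega>. w \<omega> * indicator B (U \<omega>) \<partial>M)"
proof -
  have [measurable]: "w \<in> borel_measurable M" using assms(1) by (simp add: borel_measurable_integrable)
  have "integrable M (\<lambda>\<omega>. indicator B (U \<omega>) * w \<omega>)"
    by (rule integrable_bounded_mult[where C=1]) (use assms(1) in \<open>auto split: split_indicator\<close>)
  then have int: "integrable M (\<lambda>\<omega>. w \<omega> * indicator B (U \<omega>))" by (simp add: mult.commute)
  have "emeasure (distr (density M w) MU U) B = emeasure (density M w) (U -` B \<inter> space M)"
    by (simp add: emeasure_distr)
  also have "\<dots> = (\<integral>\<^sup>+\<omega>. ennreal (w \<omega> * indicator B (U \<omega>)) \<partial>M)"
    by (simp add: emeasure_density) (auto intro!: nn_integral_cong split: split_indicator)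
  also have "\<dots> = ennreal (\<integral>\<omega>. w \<omega> * indicator B (U \<omega>) \<partial>M)"
    by (rule nn_integral_eq_integral[OF int]) (use assms(2) in \<open>auto split: split_indicator\<close>)
  finally show ?thesis .
qed

locale covariate = prob_space M for M :: "'a measure" +
  fixes X :: "'a \<Rightarrow> 'x" and MX :: "'x measure"
  assumes measurable_X [measurable]: "X \<in> measurable M MX"
begin

abbreviation FX :: "'a measure" where "FX \<equiv> sigma_of M X MX"

sublocale sigma_finite_subalgebra M FX
proof -
  have "subalgebra M FX" unfolding subalgebra_def sigma_of_def
    using measurable_sets[OF measurable_X] measurable_space[OF measurable_X]
    by (auto simp: sets_vimage_algebra2)
  then show "sigma_finite_subalgebra M FX"
    by (intro finite_measure_subalgebra_is_sigma_finite) unfold_locales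
qed

lemma measurable_sigma_of_comp:
  "f \<in> borel_measurable MX \<Longrightarrow> (\<lambda>\<omega>. f (X \<omega>)) \<in> borel_measurable FX"
  unfolding sigma_of_def
  using measurable_comp[OF measurable_vimage_algebra1, of X "space M" MX f] measurable_space[OF measurable_X]
  by (auto simp: o_def)

lemma integrable_cond_exp_fun:
  assumes "cond_exp_fun M X MX f g" "integrable M f"
  shows "integrable M (\<lambda>\<omega>. g (X \<omega>))"
proof (rule integrable_cong_AE_imp[OF real_cond_exp_int(1)[OF assms(2)]])
  show "(\<lambda>\<omega>. g (X \<omega>)) \<in> borel_measurable M"
    using assms(1) unfolding cond_exp_fun_def by (auto intro: measurable_compose[OF measurable_X])
  show "AE \<omega> in M. real_cond_exp M FX f \<omega> = g (X \<omega>)"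
    using assms(1) unfolding cond_exp_fun_def by auto
qed

lemma real_cond_exp_mult_cond_indep:
  fixes U V :: "'a \<Rightarrow> real"
  assumes [measurable]: "U \<in> borel_measurable M" "V \<in> borel_measurable M"
    and bin: "\<And>\<omega>. \<omega> \<in> space M \<Longrightarrow> U \<omega> \<in> {0, 1} \<and> V \<omega> \<in> {0, 1}"
    and CI: "cond_indep M X MX borel U borel V"
  shows "AE \<omega> in M. real_cond_exp M FX (\<lambda>\<omega>. U \<omega> * V \<omega>) \<omega>
    = real_cond_exp M FX U \<omega> * real_cond_exp M FX V \<omega>"
proof -
  let ?I = "\<lambda>W \<omega>. indicator {1} (W \<omega>) :: real"
  have "AE \<omega> in M. real_cond_exp M FX (\<lambda>\<omega>. ?I U \<omega> * ?I V \<omega>) \<omega>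
      = real_cond_exp M FX (?I U) \<omega> * real_cond_exp M FX (?I V) \<omega>"
    using CI unfolding cond_indep_def by auto
  moreover have "AE \<omega> in M. real_cond_exp M FX (\<lambda>\<omega>. U \<omega> * V \<omega>) \<omega>
      = real_cond_exp M FX (\<lambda>\<omega>. ?I U \<omega> * ?I V \<omega>) \<omega>"
    and "AE \<omega> in M. real_cond_exp M FX U \<omega> = real_cond_exp M FX (?I U) \<omega>"
    and "AE \<omega> in M. real_cond_exp M FX V \<omega> = real_cond_exp M FX (?I V) \<omega>"
    by (rule real_cond_exp_cong; auto intro!: AE_I2 dest!: bin split: split_indicator)+
  ultimately show ?thesis by eventually_elim simp
qed

lemma integral_indicator_cond_indep:
  fixes U :: "'a \<Rightarrow> 'u" and Z :: "'a \<Rightarrow> real"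
  assumes [measurable]: "U \<in> measurable M MU" "Z \<in> borel_measurable M" "B \<in> sets MU"
    and Z_bin: "\<And>\<omega>. \<omega> \<in> space M \<Longrightarrow> Z \<omega> \<in> {0, 1}"
    and CI: "cond_indep M X MX MU U borel Z" and q: "cond_exp_fun M X MX Z q"
  shows "(\<integral>\<omega>. Z \<omega> * indicator B (U \<omega>) \<partial>M) = (\<integral>\<omega>. q (X \<omega>) * indicator B (U \<omega>) \<partial>M)"
proof -
  let ?IB = "\<lambda>\<omega>. indicator B (U \<omega>) :: real"
  let ?IZ = "\<lambda>\<omega>. indicator {1} (Z \<omega>) :: real"
  have [measurable]: "q \<in> borel_measurable MX" and q_ae: "AE \<omega> in M. q (X \<omega>) = real_cond_exp M FX Z \<omega>"
    using q unfolding cond_exp_fun_def by auto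
  have Z_int: "integrable M Z"
    by (rule integrable_binary) (auto dest: Z_bin)
  have "integrable M (\<lambda>\<omega>. ?IB \<omega> * q (X \<omega>))"
    by (rule integrable_bounded_mult[where C=1, OF integrable_cond_exp_fun[OF q Z_int]])
       (auto split: split_indicator)
  then have qB_int: "integrable M (\<lambda>\<omega>. q (X \<omega>) * ?IB \<omega>)" by (simp add: mult.commute)
  have CI_B: "AE \<omega> in M. real_cond_exp M FX (\<lambda>\<omega>. ?IB \<omega> * ?IZ \<omega>) \<omega>
      = real_cond_exp M FX ?IB \<omega> * real_cond_exp M FX ?IZ \<omega>"
    using CI unfolding cond_indep_def by auto
  have IZ_ae: "AE \<omega> in M. real_cond_exp M FX ?IZ \<omega> = real_cond_exp M FX Z \<omega>"
    by (rule real_cond_exp_cong) (auto intro!: AE_I2 dest!: Z_bin split: split_indicator)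
  have "(\<integral>\<omega>. Z \<omega> * ?IB \<omega> \<partial>M) = (\<integral>\<omega>. ?IB \<omega> * ?IZ \<omega> \<partial>M)"
    by (rule Bochner_Integration.integral_cong) (auto dest!: Z_bin split: split_indicator)
  also have "\<dots> = (\<integral>\<omega>. real_cond_exp M FX (\<lambda>\<omega>. ?IB \<omega> * ?IZ \<omega>) \<omega> \<partial>M)"
    by (rule real_cond_exp_int(2)[symmetric], rule integrable_binary) (auto split: split_indicator)
  also have "\<dots> = (\<integral>\<omega>. q (X \<omega>) * real_cond_exp M FX ?IB \<omega> \<partial>M)"
    by (rule integral_cong_AE) (use CI_B IZ_ae q_ae in auto)
  also have "\<dots> = (\<integral>\<omega>. q (X \<omega>) * ?IB \<omega> \<partial>M)"
    by (rule real_cond_exp_intg(2)[OF qB_int]) (auto intro: measurable_sigma_of_comp)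
  finally show ?thesis .
qed

lemma cond_exp_fun_binary_bounds:
  assumes Z_meas: "Z \<in> borel_measurable M" and Z_bin: "\<And>\<omega>. \<omega> \<in> space M \<Longrightarrow> Z \<omega> \<in> {0, 1}"
    and q: "cond_exp_fun M X MX Z q"
  shows "AE \<omega> in M. 0 \<le> q (X \<omega>) \<and> q (X \<omega>) \<le> 1"
proof -
  have Z_int: "integrable M Z"
    by (rule integrable_binary[OF Z_meas Z_bin])
  have "AE \<omega> in M. 0 \<le> real_cond_exp M FX Z \<omega>" "AE \<omega> in M. real_cond_exp M FX Z \<omega> \<le> 1"
    by (rule real_cond_exp_ge_c real_cond_exp_le_c; use Z_int in \<open>auto intro!: AE_I2 dest: Z_bin\<close>)+
  moreover have "AE \<omega> in M. q (X \<omega>) = real_cond_exp M FX Z \<omega>"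
    using q unfolding cond_exp_fun_def by auto
  ultimately show ?thesis by eventually_elim simp
qed

lemma distr_density_cond_indep:
  fixes U :: "'a \<Rightarrow> 'u" and Z :: "'a \<Rightarrow> real"
  assumes [measurable]: "U \<in> measurable M MU" "Z \<in> borel_measurable M"
    and Z_bin: "\<And>\<omega>. \<omega> \<in> space M \<Longrightarrow> Z \<omega> \<in> {0, 1}"
    and CI: "cond_indep M X MX MU U borel Z" and q: "cond_exp_fun M X MX Z q"
  shows "distr (density M Z) MU U = distr (density M (\<lambda>\<omega>. q (X \<omega>))) MU U"
proof (rule measure_eqI)
  fix B assume "B \<in> sets (distr (density M Z) MU U)"
  then have B: "B \<in> sets MU" by simp
  have Z_int: "integrable M Z"
    by (rule integrable_binary) (auto dest: Z_bin)
  have Z_pos: "AE \<omega> in M. 0 \<le> Z \<omega>" by (auto intro!: AE_I2 dest: Z_bin)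
  have q_pos: "AE \<omega> in M. 0 \<le> q (X \<omega>)"
    using cond_exp_fun_binary_bounds[OF _ Z_bin q] by auto
  show "emeasure (distr (density M Z) MU U) B = emeasure (distr (density M (\<lambda>\<omega>. q (X \<omega>))) MU U) B"
    using integral_indicator_cond_indep[OF _ _ B Z_bin CI q]
      emeasure_distr_density_eq_integral[OF Z_int Z_pos _ B]
      emeasure_distr_density_eq_integral[OF integrable_cond_exp_fun[OF q Z_int] q_pos _ B]
    by simp
qed simp

lemma integral_mult_cond_indep:
  fixes U :: "'a \<Rightarrow> 'u" and Z :: "'a \<Rightarrow> real"
  assumes [measurable]: "U \<in> measurable M MU" "Z \<in> borel_measurable M" "h \<in> borel_measurable MU"
    and Z_bin: "\<And>\<omega>. \<omega> \<in> space M \<Longrightarrow> Z \<omega> \<in> {0, 1}"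
    and CI: "cond_indep M X MX MU U borel Z" and q: "cond_exp_fun M X MX Z q"
  shows "(\<integral>\<omega>. Z \<omega> * h (U \<omega>) \<partial>M) = (\<integral>\<omega>. q (X \<omega>) * h (U \<omega>) \<partial>M)"
proof -
  have [measurable]: "q \<in> borel_measurable MX" using q unfolding cond_exp_fun_def by auto
  have "AE \<omega> in M. 0 \<le> Z \<omega>" by (auto intro!: AE_I2 dest: Z_bin)
  moreover have "AE \<omega> in M. 0 \<le> q (X \<omega>)"
    using cond_exp_fun_binary_bounds[OF _ Z_bin q] by auto
  ultimately show ?thesis
    using distr_density_cond_indep[OF _ _ Z_bin CI q]
      integral_distr[of U "density M Z" MU h] integral_real_density[of Z M "\<lambda>\<omega>. h (U \<omega>)"]
      integral_distr[of U "density M (\<lambda>\<omega>. q (X \<omega>))" MU h]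
      integral_real_density[of "\<lambda>\<omega>. q (X \<omega>)" M "\<lambda>\<omega>. h (U \<omega>)"]
    by simp
qed

lemma integral_mult_cond_exp_fun:
  assumes f: "integrable M f" "cond_exp_fun M X MX f g"
    and q: "q \<in> borel_measurable MX" "AE \<omega> in M. \<bar>q (X \<omega>)\<bar> \<le> C"
  shows "integrable M (\<lambda>\<omega>. q (X \<omega>) * f \<omega>)" "integrable M (\<lambda>\<omega>. q (X \<omega>) * g (X \<omega>))"
    and "(\<integral>\<omega>. q (X \<omega>) * f \<omega> \<partial>M) = (\<integral>\<omega>. q (X \<omega>) * g (X \<omega>) \<partial>M)"
proof -
  have [measurable]: "q \<in> borel_measurable MX" "g \<in> borel_measurable MX"
    and g_ae: "AE \<omega> in M. g (X \<omega>) = real_cond_exp M FX f \<omega>"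
    using f q unfolding cond_exp_fun_def by auto
  show qf_int: "integrable M (\<lambda>\<omega>. q (X \<omega>) * f \<omega>)"
    by (rule integrable_bounded_mult[OF f(1) _ q(2)]) measurable
  show "integrable M (\<lambda>\<omega>. q (X \<omega>) * g (X \<omega>))"
    by (rule integrable_bounded_mult[OF integrable_cond_exp_fun[OF f(2,1)] _ q(2)]) measurable
  have "(\<integral>\<omega>. q (X \<omega>) * f \<omega> \<partial>M) = (\<integral>\<omega>. q (X \<omega>) * real_cond_exp M FX f \<omega> \<partial>M)"
    by (rule real_cond_exp_intg(2)[OF qf_int, symmetric])
       (auto intro: measurable_sigma_of_comp borel_measurable_integrable[OF f(1)])
  also have "\<dots> = (\<integral>\<omega>. q (X \<omega>) * g (X \<omega>) \<partial>M)"
    by (rule integral_cong_AE) (use g_ae in auto)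
  finally show "(\<integral>\<omega>. q (X \<omega>) * f \<omega> \<partial>M) = (\<integral>\<omega>. q (X \<omega>) * g (X \<omega>) \<partial>M)" .
qed

lemma integral_treatment_effect:
  fixes Z Y1 Y0 :: "'a \<Rightarrow> real"
  assumes Y_int: "integrable M Y1" "integrable M Y0"
    and Z_meas: "Z \<in> borel_measurable M" and Z_bin: "\<And>\<omega>. \<omega> \<in> space M \<Longrightarrow> Z \<omega> \<in> {0, 1}"
    and CI: "cond_indep M X MX borel (\<lambda>\<omega>. (Y1 \<omega>, Y0 \<omega>)) borel Z"
    and q: "cond_exp_fun M X MX Z q" and \<tau>: "cond_exp_fun M X MX (\<lambda>\<omega>. Y1 \<omega> - Y0 \<omega>) \<tau>"
  shows "integrable M (\<lambda>\<omega>. Z \<omega> * (Y1 \<omega> - Y0 \<omega>))" "integrable M (\<lambda>\<omega>. q (X \<omega>) * \<tau> (X \<omega>))"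
    and "(\<integral>\<omega>. Z \<omega> * (Y1 \<omega> - Y0 \<omega>) \<partial>M) = (\<integral>\<omega>. q (X \<omega>) * \<tau> (X \<omega>) \<partial>M)"
proof -
  have D_int: "integrable M (\<lambda>\<omega>. Y1 \<omega> - Y0 \<omega>)" using Y_int by simp
  have Y_meas: "(\<lambda>\<omega>. (Y1 \<omega>, Y0 \<omega>)) \<in> borel_measurable M"
    using Y_int by (simp add: borel_measurable_integrable)
  have diff_meas: "(\<lambda>y. fst y - snd y :: real) \<in> borel_measurable borel"
    by (intro borel_measurable_continuous_onI continuous_intros)
  have q_meas: "q \<in> borel_measurable MX" using q unfolding cond_exp_fun_def by auto
  have q_bound: "AE \<omega> in M. \<bar>q (X \<omega>)\<bar> \<le> 1"
    using cond_exp_fun_binary_bounds[OF Z_meas Z_bin q] by auto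
  note tower = integral_mult_cond_exp_fun[OF D_int \<tau> q_meas q_bound]
  show "integrable M (\<lambda>\<omega>. Z \<omega> * (Y1 \<omega> - Y0 \<omega>))"
    by (rule integrable_bounded_mult[OF D_int Z_meas, where C=1]) (auto intro!: AE_I2 dest: Z_bin)
  show "integrable M (\<lambda>\<omega>. q (X \<omega>) * \<tau> (X \<omega>))" by (fact tower(2))
  show "(\<integral>\<omega>. Z \<omega> * (Y1 \<omega> - Y0 \<omega>) \<partial>M) = (\<integral>\<omega>. q (X \<omega>) * \<tau> (X \<omega>) \<partial>M)"
    using integral_mult_cond_indep[OF Y_meas Z_meas diff_meas Z_bin CI q] tower(3) by simp
qed

lemma cond_exp_fun_mixture:
  fixes A S :: "'a \<Rightarrow> real" and r \<pi> \<rho> p :: "'x \<Rightarrow> real"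
  assumes r_meas [measurable]: "r \<in> borel_measurable MX"
    and A_meas [measurable]: "A \<in> borel_measurable M" and S_meas [measurable]: "S \<in> borel_measurable M"
    and r_bin: "\<And>x. x \<in> space MX \<Longrightarrow> r x \<in> {0, 1}"
    and bin: "\<And>\<omega>. \<omega> \<in> space M \<Longrightarrow> A \<omega> \<in> {0, 1} \<and> S \<omega> \<in> {0, 1}"
    and CI: "cond_indep M X MX borel A borel S"
    and \<pi>: "cond_exp_fun M X MX A \<pi>" and \<rho>: "cond_exp_fun M X MX S \<rho>"
    and p: "cond_exp_fun M X MX (\<lambda>\<omega>. S \<omega> * r (X \<omega>) + (1 - S \<omega>) * A \<omega>) p"
  shows "AE \<omega> in M. p (X \<omega>) - \<pi> (X \<omega>) = \<rho> (X \<omega>) * (r (X \<omega>) - \<pi> (X \<omega>))"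
    and "AE \<omega> in M. r (X \<omega>) - p (X \<omega>) = (1 - \<rho> (X \<omega>)) * (r (X \<omega>) - \<pi> (X \<omega>))"
proof -
  have bin_space: "A \<omega> \<in> {0, 1} \<and> S \<omega> \<in> {0, 1} \<and> r (X \<omega>) \<in> {0, 1}" if "\<omega> \<in> space M" for \<omega>
    using bin r_bin measurable_space[OF measurable_X] that by auto
  have ints: "integrable M A" "integrable M (\<lambda>\<omega>. A \<omega> * S \<omega>)" "integrable M (\<lambda>\<omega>. r (X \<omega>) * S \<omega>)"
    by (rule integrable_binary; use bin_space in force)+
  have "(\<lambda>\<omega>. S \<omega> * r (X \<omega>) + (1 - S \<omega>) * A \<omega>) = (\<lambda>\<omega>. r (X \<omega>) * S \<omega> + (A \<omega> - A \<omega> * S \<omega>))"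
    by (auto simp: algebra_simps)
  then have "AE \<omega> in M. p (X \<omega>) = real_cond_exp M FX (\<lambda>\<omega>. r (X \<omega>) * S \<omega> + (A \<omega> - A \<omega> * S \<omega>)) \<omega>"
    using p unfolding cond_exp_fun_def by simp
  moreover note real_cond_exp_add[OF ints(3) Bochner_Integration.integrable_diff[OF ints(1,2)]]
    real_cond_exp_mult[OF measurable_sigma_of_comp[OF r_meas] S_meas ints(3)]
    real_cond_exp_diff[OF ints(1,2)]
  moreover have "AE \<omega> in M. real_cond_exp M FX (\<lambda>\<omega>. A \<omega> * S \<omega>) \<omega>
      = real_cond_exp M FX A \<omega> * real_cond_exp M FX S \<omega>"
    using bin by (intro real_cond_exp_mult_cond_indep[OF A_meas S_meas _ CI]) auto
  moreover have "AE \<omega> in M. \<pi> (X \<omega>) = real_cond_exp M FX A \<omega>" "AE \<omega> in M. \<rho> (X \<omega>) = real_cond_exp M FX S \<omega>"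
    using \<pi> \<rho> unfolding cond_exp_fun_def by auto
  ultimately have p_eq: "AE \<omega> in M. p (X \<omega>) = \<pi> (X \<omega>) + \<rho> (X \<omega>) * (r (X \<omega>) - \<pi> (X \<omega>))"
    by eventually_elim (simp add: algebra_simps)
  show "AE \<omega> in M. p (X \<omega>) - \<pi> (X \<omega>) = \<rho> (X \<omega>) * (r (X \<omega>) - \<pi> (X \<omega>))"
    using p_eq by eventually_elim simp
  show "AE \<omega> in M. r (X \<omega>) - p (X \<omega>) = (1 - \<rho> (X \<omega>)) * (r (X \<omega>) - \<pi> (X \<omega>))"
    using p_eq by eventually_elim (simp add: algebra_simps)
qed

end

lemma integral_mult_cong_AE:
  fixes f g h :: "'a \<Rightarrow> real"
  assumes "AE \<omega> in M. f \<omega> = g \<omega>"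
    and "f \<in> borel_measurable M" "g \<in> borel_measurable M" "h \<in> borel_measurable M"
  shows "(\<integral>\<omega>. f \<omega> * h \<omega> \<partial>M) = (\<integral>\<omega>. g \<omega> * h \<omega> \<partial>M)"
  using assms by (intro integral_cong_AE) auto

lemma integral_mult_diff_eq:
  fixes a b c d f g :: "'a \<Rightarrow> real"
  assumes "integrable M (\<lambda>\<omega>. a \<omega> * f \<omega>)" "integrable M (\<lambda>\<omega>. c \<omega> * g \<omega>)"
    and "(\<integral>\<omega>. a \<omega> * f \<omega> \<partial>M) = (\<integral>\<omega>. c \<omega> * g \<omega> \<partial>M)"
    and "integrable M (\<lambda>\<omega>. b \<omega> * f \<omega>)" "integrable M (\<lambda>\<omega>. d \<omega> * g \<omega>)"
    and "(\<integral>\<omega>. b \<omega> * f \<omega> \<partial>M) = (\<integral>\<omega>. d \<omega> * g \<omega> \<partial>M)"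
  shows "(\<integral>\<omega>. (a \<omega> - b \<omega>) * f \<omega> \<partial>M) = (\<integral>\<omega>. (c \<omega> - d \<omega>) * g \<omega> \<partial>M)"
  using assms by (simp add: left_diff_distrib)

theorem mainTheorem3:
  fixes M :: "'a measure" and MX :: "'x measure"
    and X :: "'a \<Rightarrow> 'x" and r :: "'x \<Rightarrow> real"
    and A Sst Y1 Y0 :: "'a \<Rightarrow> real"
    and \<pi> \<pi>st \<rho>st \<tau> :: "'x \<Rightarrow> real"
  defines "Ast \<equiv> (\<lambda>\<omega>. Sst \<omega> * r (X \<omega>) + (1 - Sst \<omega>) * A \<omega>)"
  defines "Yst \<equiv> (\<lambda>\<omega>. Ast \<omega> * Y1 \<omega> + (1 - Ast \<omega>) * Y0 \<omega>)"
  defines "Ys0 \<equiv> (\<lambda>\<omega>. A \<omega> * Y1 \<omega> + (1 - A \<omega>) * Y0 \<omega>)"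
  defines "Ys1 \<equiv> (\<lambda>\<omega>. r (X \<omega>) * Y1 \<omega> + (1 - r (X \<omega>)) * Y0 \<omega>)"
  assumes "prob_space M"
    and X_meas: "X \<in> measurable M MX"
    and r_meas: "r \<in> borel_measurable MX"
    and r_bin: "\<And>x. x \<in> space MX \<Longrightarrow> r x \<in> {0, 1}"
    and A_meas: "A \<in> borel_measurable M"
    and A_bin: "\<And>\<omega>. \<omega> \<in> space M \<Longrightarrow> A \<omega> \<in> {0, 1}"
    and S_meas: "Sst \<in> borel_measurable M"
    and S_bin: "\<And>\<omega>. \<omega> \<in> space M \<Longrightarrow> Sst \<omega> \<in> {0, 1}"
    and Y1_int: "integrable M Y1"
    and Y0_int: "integrable M Y0"
    and CI1: "cond_indep M X MX borel (\<lambda>\<omega>. (Y1 \<omega>, Y0 \<omega>)) borel A"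
    and CI2: "cond_indep M X MX borel (\<lambda>\<omega>. (Y1 \<omega>, Y0 \<omega>)) borel Ast"
    and CI3: "cond_indep M X MX borel A borel Sst"
    and pi_def: "cond_exp_fun M X MX A \<pi>"
    and pist_def: "cond_exp_fun M X MX Ast \<pi>st"
    and rho_def: "cond_exp_fun M X MX Sst \<rho>st"
    and tau_def: "cond_exp_fun M X MX (\<lambda>\<omega>. Y1 \<omega> - Y0 \<omega>) \<tau>"
    and pi_pos: "\<And>x. x \<in> space MX \<Longrightarrow> 0 < \<pi> x \<and> \<pi> x < 1"
    and pist_pos: "\<And>x. x \<in> space MX \<Longrightarrow> 0 < \<pi>st x \<and> \<pi>st x < 1"
  shows "(\<integral>\<omega>. Yst \<omega> - Ys0 \<omega> \<partial>M) = (\<integral>\<omega>. (\<pi>st (X \<omega>) - \<pi> (X \<omega>)) * \<tau> (X \<omega>) \<partial>M)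
       \<and> (\<integral>\<omega>. Yst \<omega> - Ys0 \<omega> \<partial>M)
           = (\<integral>\<omega>. \<rho>st (X \<omega>) * (r (X \<omega>) - \<pi> (X \<omega>)) * \<tau> (X \<omega>) \<partial>M)
       \<and> (\<integral>\<omega>. Ys1 \<omega> - Yst \<omega> \<partial>M) = (\<integral>\<omega>. (r (X \<omega>) - \<pi>st (X \<omega>)) * \<tau> (X \<omega>) \<partial>M)
       \<and> (\<integral>\<omega>. Ys1 \<omega> - Yst \<omega> \<partial>M)
           = (\<integral>\<omega>. (1 - \<rho>st (X \<omega>)) * (r (X \<omega>) - \<pi> (X \<omega>)) * \<tau> (X \<omega>) \<partial>M)"
proof -
  interpret covariate M X MX
    by (intro covariate.intro covariate_axioms.intro) (fact, fact X_meas)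
  note [measurable] = r_meas A_meas S_meas
  have [measurable]: "\<pi> \<in> borel_measurable MX" "\<pi>st \<in> borel_measurable MX"
      "\<rho>st \<in> borel_measurable MX" "\<tau> \<in> borel_measurable MX"
    using pi_def pist_def rho_def tau_def unfolding cond_exp_fun_def by auto
  have X_space: "\<And>\<omega>. \<omega> \<in> space M \<Longrightarrow> X \<omega> \<in> space MX" using measurable_space[OF X_meas] .
  have Ast_meas: "Ast \<in> borel_measurable M" unfolding Ast_def by measurable
  have Ast_bin: "Ast \<omega> \<in> {0, 1}" if "\<omega> \<in> space M" for \<omega>
    using A_bin[OF that] S_bin[OF that] r_bin[OF X_space[OF that]] unfolding Ast_def by auto
  note eff_A = integral_treatment_effect[OF Y1_int Y0_int A_meas A_bin CI1 pi_def tau_def]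
  note eff_Ast = integral_treatment_effect[OF Y1_int Y0_int Ast_meas Ast_bin CI2 pist_def tau_def]
  have "AE \<omega> in M. \<bar>r (X \<omega>)\<bar> \<le> 1" by (auto intro!: AE_I2 dest!: X_space r_bin)
  note eff_r = integral_mult_cond_exp_fun[OF Bochner_Integration.integrable_diff[OF Y1_int Y0_int] tau_def r_meas this]
  have "Yst = (\<lambda>\<omega>. (Ast \<omega> - A \<omega>) * (Y1 \<omega> - Y0 \<omega>) + Ys0 \<omega>)"
    "Ys1 = (\<lambda>\<omega>. (r (X \<omega>) - Ast \<omega>) * (Y1 \<omega> - Y0 \<omega>) + Yst \<omega>)"
    unfolding Yst_def Ys0_def Ys1_def by (auto simp: algebra_simps)
  then have Lambda: "(\<integral>\<omega>. Yst \<omega> - Ys0 \<omega> \<partial>M) = (\<integral>\<omega>. (\<pi>st (X \<omega>) - \<pi> (X \<omega>)) * \<tau> (X \<omega>) \<partial>M)"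
    and Gamma: "(\<integral>\<omega>. Ys1 \<omega> - Yst \<omega> \<partial>M) = (\<integral>\<omega>. (r (X \<omega>) - \<pi>st (X \<omega>)) * \<tau> (X \<omega>) \<partial>M)"
    using integral_mult_diff_eq[OF eff_Ast eff_A] integral_mult_diff_eq[OF eff_r eff_Ast] by simp_all
  note mix = cond_exp_fun_mixture[OF r_meas A_meas S_meas r_bin _ CI3 pi_def rho_def pist_def[unfolded Ast_def]]
  have Lambda_rho: "(\<integral>\<omega>. (\<pi>st (X \<omega>) - \<pi> (X \<omega>)) * \<tau> (X \<omega>) \<partial>M)
      = (\<integral>\<omega>. \<rho>st (X \<omega>) * (r (X \<omega>) - \<pi> (X \<omega>)) * \<tau> (X \<omega>) \<partial>M)"
    and Gamma_rho: "(\<integral>\<omega>. (r (X \<omega>) - \<pi>st (X \<omega>)) * \<tau> (X \<omega>) \<partial>M)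
      = (\<integral>\<omega>. (1 - \<rho>st (X \<omega>)) * (r (X \<omega>) - \<pi> (X \<omega>)) * \<tau> (X \<omega>) \<partial>M)"
    using A_bin S_bin by (auto intro!: integral_mult_cong_AE mix)
  show ?thesis using Lambda Lambda_rho Gamma Gamma_rho by simp
qed

end
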